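(* Let $\beta>0$, $\tilde\lambda\in(0,1]$, $\mathcal{L}\ge 0$, $x\ge 0$, $y\le 0$, $z\ge 0$. For $\Delta>y$ let $p^D(\Delta)=\frac{x}{\Delta-y}$, and say that $\Delta$ satisfies the leverage constraint if $\Delta>y$ and $$\beta(\mathcal{L}+\Delta)\le \tilde\lambda\Big(z+\Delta\,p^D(\Delta)\Big).$$ Consider the quadratic polynomial in $\Delta$ $$-\beta \Delta^2 + \Delta\Big( \tilde \lambda (z+x) - \beta(\mathcal{L} - y)\Big) - \tilde\lambda zy + \beta\mathcal{L} y .$$ If its roots are real, denote them $\Delta_{\min}\le\Delta_{\max}$; then the set of $\Delta$ satisfying the leverage constraint is $[\Delta_{\min},\Delta_{\max}]\cap(y,\infty)$. If its roots are not real, then no $\Delta$ satisfies the leverage constraint.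
   Context: Single period $t$ of a stablecoin market model. A speculator owes $\mathcal{L}=\mathcal{L}_{t-1}$ stablecoins and holds Ether worth $z=n_{t-1}p^E_t$ dollars; $x=w^D\bar n_{t-1}p^E_t\ge0$ is the new dollar stablecoin demand from the stablecoin holder and $y=w^D\bar m_{t-1}-\mathcal{L}_{t-1}\le 0$ (so $|y|$ is the "free supply"). The speculator changes the stablecoin supply by $\Delta$ (new supply $\mathcal{L}+\Delta$), and for $\Delta>y$ the stablecoin market clears at dollar price $p^D(\Delta)=x/(\Delta-y)$; the speculator's assets after the trade are worth $z+\Delta p^D(\Delta)$. Its leverage is $\lambda=\beta\cdot\text{liabilities}/\text{assets}=\beta(\mathcal{L}+\Delta)/(z+\Delta p^D(\Delta))$, where $\beta$ is the collateral liquidation threshold, and the leverage constraint is $\lambda\le\tilde\lambda$ (the case $\tilde\lambda=1$ being the protocol's liquidation constraint). *)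

theory Defs
  imports Complex_Main
begin

text \<open>Stablecoin dollar price after a supply change d (meaningful for d > y).\<close>
definition pD :: "real \<Rightarrow> real \<Rightarrow> real \<Rightarrow> real" where
  "pD x y d = x / (d - y)"

definition lev_ok :: "real \<Rightarrow> real \<Rightarrow> real \<Rightarrow> real \<Rightarrow> real \<Rightarrow> real \<Rightarrow> real \<Rightarrow> bool" where
  "lev_ok beta lt L x y z d \<longleftrightarrow> d > y \<and> beta * (L + d) \<le> lt * (z + d * pD x y d)"

definition levq :: "real \<Rightarrow> real \<Rightarrow> real \<Rightarrow> real \<Rightarrow> real \<Rightarrow> real \<Rightarrow> real \<Rightarrow> real" where
  "levq beta lt L x y z d = - beta * d^2 + d * (lt * (z + x) - beta * (L - y)) - lt * z * y + beta * L * y"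

end

theory Submission
  imports Defs
begin

text \<open>Since the price is \<open>x / (d - y)\<close> with \<open>d - y > 0\<close>, multiplying the leverage
constraint by \<open>d - y\<close> turns it into \<open>levq \<ge> 0\<close>, a concave quadratic inequality in \<open>d\<close>.
Completing the square, a concave quadratic is nonnegative exactly between its real roots,
and negative everywhere when it has none.\<close>

lemma lev_ok_iff_levq_nonneg:
  "lev_ok beta lt L x y z d \<longleftrightarrow> y < d \<and> 0 \<le> levq beta lt L x y z d"
proof (cases "y < d")
  case True
  then have pos: "d - y > 0" by simp
  have "beta * (L + d) \<le> lt * (z + d * pD x y d) \<longleftrightarrow>
        beta * (L + d) * (d - y) \<le> lt * (z + d * pD x y d) * (d - y)"
    using pos by simp
  also have "lt * (z + d * pD x y d) * (d - y) = lt * (z * (d - y) + d * x)"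
    using pos by (simp add: pD_def field_simps)
  also have "beta * (L + d) * (d - y) \<le> lt * (z * (d - y) + d * x) \<longleftrightarrow>
             0 \<le> levq beta lt L x y z d"
    unfolding levq_def by (simp add: power2_eq_square algebra_simps)
  finally show ?thesis using True unfolding lev_ok_def by simp
qed (simp add: lev_ok_def)

lemma concave_quadratic_completed_square:
  fixes a b c :: real
  assumes "a > 0"
  obtains h q where "\<And>d. - a * d\<^sup>2 + b * d + c = a * (q - (d - h)\<^sup>2)"
proof
  show "- a * d\<^sup>2 + b * d + c = a * ((b\<^sup>2 + 4 * a * c) / (2 * a)\<^sup>2 - (d - b / (2 * a))\<^sup>2)" for d
    using assms by (simp add: field_simps power2_eq_square)
qed

lemma concave_quadratic_neg_if_no_roots:
  fixes a b c d :: real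
  assumes "a > 0" and "{d. - a * d\<^sup>2 + b * d + c = 0} = {}"
  shows "- a * d\<^sup>2 + b * d + c < 0"
proof -
  obtain h q where sq: "\<And>d. - a * d\<^sup>2 + b * d + c = a * (q - (d - h)\<^sup>2)"
    using concave_quadratic_completed_square[OF \<open>a > 0\<close>] by blast
  have "q < 0"
  proof (rule ccontr)
    assume "\<not> q < 0"
    then have "- a * (h + sqrt q)\<^sup>2 + b * (h + sqrt q) + c = 0" unfolding sq by simp
    with assms(2) show False by blast
  qed
  then have "q - (d - h)\<^sup>2 < 0" using zero_le_power2[of "d - h"] by linarith
  then show ?thesis unfolding sq using \<open>a > 0\<close> by (rule mult_pos_neg[rotated])
qed

lemma concave_quadratic_nonneg_between_roots:
  fixes a b c r1 r2 :: real
  assumes "a > 0" and "r1 \<le> r2" and roots: "{d. - a * d\<^sup>2 + b * d + c = 0} = {r1, r2}"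
  shows "{d. 0 \<le> - a * d\<^sup>2 + b * d + c} = {r1..r2}"
proof -
  obtain h q where sq: "\<And>d. - a * d\<^sup>2 + b * d + c = a * (q - (d - h)\<^sup>2)"
    using concave_quadratic_completed_square[OF \<open>a > 0\<close>] by blast
  have "- a * r1\<^sup>2 + b * r1 + c = 0" using roots by blast
  then have "q = (r1 - h)\<^sup>2" using \<open>a > 0\<close> unfolding sq by simp
  then have "q \<ge> 0" by simp
  define s where "s = sqrt q"
  have "s \<ge> 0" and q_eq: "q = s\<^sup>2" using \<open>q \<ge> 0\<close> by (simp_all add: s_def)
  have "- a * d\<^sup>2 + b * d + c = 0 \<longleftrightarrow> d = h - s \<or> d = h + s" for d
  proof -
    have "a * (s\<^sup>2 - (d - h)\<^sup>2) = 0 \<longleftrightarrow> (d - h)\<^sup>2 = s\<^sup>2" using \<open>a > 0\<close> by auto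
    also have "\<dots> \<longleftrightarrow> d - h = s \<or> d - h = - s" by (rule power2_eq_iff)
    finally show ?thesis unfolding sq q_eq by linarith
  qed
  then have "{r1, r2} = {h - s, h + s}" unfolding roots[symmetric] by blast
  with \<open>r1 \<le> r2\<close> \<open>s \<ge> 0\<close> have r1: "r1 = h - s" and r2: "r2 = h + s"
    unfolding doubleton_eq_iff by arith+
  have "0 \<le> - a * d\<^sup>2 + b * d + c \<longleftrightarrow> r1 \<le> d \<and> d \<le> r2" for d
  proof -
    have "0 \<le> a * (s\<^sup>2 - (d - h)\<^sup>2) \<longleftrightarrow> (d - h)\<^sup>2 \<le> s\<^sup>2"
      using \<open>a > 0\<close> by (simp add: zero_le_mult_iff)
    also have "\<dots> \<longleftrightarrow> \<bar>d - h\<bar> \<le> \<bar>s\<bar>" by (rule abs_le_square_iff[symmetric])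
    finally show ?thesis unfolding sq q_eq r1 r2 using \<open>s \<ge> 0\<close> by arith
  qed
  then show ?thesis unfolding set_eq_iff mem_Collect_eq atLeastAtMost_iff by blast
qed

theorem proposition3p1:
  fixes beta lt L x y z :: real
  assumes "beta > 0" and "0 < lt" and "lt \<le> 1" and "L \<ge> 0" and "x \<ge> 0" and "y \<le> 0" and "z \<ge> 0"
  shows "(\<forall>dmin dmax. dmin \<le> dmax \<and> {d. levq beta lt L x y z d = 0} = {dmin, dmax} \<longrightarrow>
            {d. lev_ok beta lt L x y z d} = {dmin..dmax} \<inter> {y<..})
       \<and> ({d. levq beta lt L x y z d = 0} = {} \<longrightarrow> {d. lev_ok beta lt L x y z d} = {})"
proof -
  define b where "b = lt * (z + x) - beta * (L - y)"
  define c where "c = - lt * z * y + beta * L * y"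
  have levq_eq: "levq beta lt L x y z = (\<lambda>d. - beta * d\<^sup>2 + b * d + c)"
    unfolding levq_def b_def c_def by (simp add: algebra_simps)
  have lev_set: "{d. lev_ok beta lt L x y z d} = {d. 0 \<le> levq beta lt L x y z d} \<inter> {y<..}"
    by (auto simp: lev_ok_iff_levq_nonneg)
  show ?thesis
  proof (intro conjI allI impI)
    fix dmin dmax
    assume "dmin \<le> dmax \<and> {d. levq beta lt L x y z d = 0} = {dmin, dmax}"
    then have "{d. 0 \<le> levq beta lt L x y z d} = {dmin..dmax}"
      unfolding levq_eq using concave_quadratic_nonneg_between_roots[OF \<open>beta > 0\<close>] by blast
    then show "{d. lev_ok beta lt L x y z d} = {dmin..dmax} \<inter> {y<..}"
      unfolding lev_set by simp
  next
    assume "{d. levq beta lt L x y z d = 0} = {}"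
    then have "\<not> 0 \<le> levq beta lt L x y z d" for d
      unfolding levq_eq not_le using concave_quadratic_neg_if_no_roots[OF \<open>beta > 0\<close>] by blast
    then show "{d. lev_ok beta lt L x y z d} = {}"
      unfolding lev_set by blast
  qed
qed

end
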